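(* Let $f_1(x)=\log(1+x^2)$ for $x\in\mathbb R$, and let $f_1^{(4)}$ denote its fourth derivative. Then \[ \int_{\mathbb R} f_1^{(4)}(x)\, f_1(x)^3\,dx<0 . \] *)

theory Defs
  imports "HOL-Analysis.Analysis"
begin

definition f1 :: "real \<Rightarrow> real" where
  "f1 x = ln (1 + x\<^sup>2)"

end

theory Submission
  imports Defs "HOL-Probability.Sinc_Integral" "HOL-Real_Asymp.Real_Asymp"
begin

(* The pointwise identity
     f'''' f^3 = (f''' f^3 - 3 f'' f^2 f' + 2 f f'^3)' + 3 f''^2 f^2 - 2 f'^4
   and the decay of the boundary term at infinity turn the integral into the integral of
   3 f''^2 f^2 - 2 f'^4. With <x> = sqrt (1 + x^2), the inequality 2 ln r <= r - 1/r at
   r = sqrt <x> gives f^2 <= 4 (<x> - 2 + 1/<x>), so this integrand is dominated by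
   12 (<x> - 2 + 1/<x>) f''^2 - 2 f'^4, a combination of negative powers of <x> that can be
   integrated in closed form: its integral is 2784/35 - 26 pi < 0. *)

lemma one_plus_square_pos: "0 < 1 + (x::real)\<^sup>2"
  by (simp add: add_pos_nonneg)

lemma integrable_lborel_if_bigo_inverse_square:
  fixes f :: "real \<Rightarrow> real"
  assumes cont: "\<And>x. isCont f x"
    and top: "f \<in> O[at_top](\<lambda>x. inverse (1 + x\<^sup>2))"
    and bot: "f \<in> O[at_bot](\<lambda>x. inverse (1 + x\<^sup>2))"
  shows "integrable lborel f"
proof -
  have weight: "\<bar>f x\<bar> \<le> c * inverse (1 + x\<^sup>2) \<longleftrightarrow> \<bar>f x\<bar> * (1 + x\<^sup>2) \<le> c" for x c
    using one_plus_square_pos[of x] by (simp add: field_simps)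
  obtain c\<^sub>1 X where c\<^sub>1: "\<And>x. x \<ge> X \<Longrightarrow> \<bar>f x\<bar> * (1 + x\<^sup>2) \<le> c\<^sub>1"
    using top by (elim landau_o.bigE) (auto simp: eventually_at_top_linorder weight)
  obtain c\<^sub>2 Y where c\<^sub>2: "\<And>x. x \<le> Y \<Longrightarrow> \<bar>f x\<bar> * (1 + x\<^sup>2) \<le> c\<^sub>2"
    using bot by (elim landau_o.bigE) (auto simp: eventually_at_bot_linorder weight)
  have "compact ((\<lambda>x. f x * (1 + x\<^sup>2)) ` {Y..X})"
    using cont by (intro compact_continuous_image continuous_at_imp_continuous_on)
      (auto intro: continuous_intros)
  then obtain M where M: "\<And>x. x \<in> {Y..X} \<Longrightarrow> \<bar>f x\<bar> * (1 + x\<^sup>2) \<le> M"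
    using one_plus_square_pos by (force dest!: compact_imp_bounded simp: bounded_iff abs_mult)
  define C where "C = max c\<^sub>1 (max c\<^sub>2 M)"
  have bound: "\<bar>f x\<bar> * (1 + x\<^sup>2) \<le> C" for x
    using c\<^sub>1[of x] c\<^sub>2[of x] M[of x] unfolding C_def by fastforce
  have "0 \<le> C"
    using bound[of 0] abs_ge_zero[of "f 0"] by simp
  then have dominated: "norm (f x) \<le> norm (C * inverse (1 + x\<^sup>2))" for x
    using bound weight[of x C] by (simp add: abs_mult)
  have "integrable lborel (\<lambda>x. inverse (1 + x\<^sup>2) :: real)"
    using integrable_inverse_1_plus_square by (simp add: set_integrable_def)
  then have "integrable lborel (\<lambda>x. C * inverse (1 + x\<^sup>2))"
    by (rule integrable_mult_right)
  moreover have "f \<in> borel_measurable lborel"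
    using cont by (simp add: borel_measurable_continuous_onI continuous_at_imp_continuous_on)
  ultimately show ?thesis
    by (rule Bochner_Integration.integrable_bound[OF _ _ AE_I2[OF dominated]])
qed

lemma integral_lborel_FTC:
  fixes f F :: "real \<Rightarrow> real"
  assumes F: "\<And>x. (F has_real_derivative f x) (at x)"
    and cont: "\<And>x. isCont f x"
    and integrable: "integrable lborel f"
    and bot: "(F \<longlongrightarrow> A) at_bot" and top: "(F \<longlongrightarrow> B) at_top"
  shows "(\<integral>x. f x \<partial>lborel) = B - A"
proof -
  have "(LBINT x=-\<infinity>..\<infinity>. f x) = B - A"
  proof (rule interval_integral_FTC_integrable)
    show "(F has_vector_derivative f x) (at x)" for x
      using F by (simp add: has_real_derivative_iff_has_vector_derivative)
    show "set_integrable lborel (einterval (-\<infinity>) \<infinity>) f"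
      using integrable by (simp add: set_integrable_def)
    show "((F \<circ> real_of_ereal) \<longlongrightarrow> A) (at_right (-\<infinity>))"
      unfolding ereal_tendsto_simps1 by (rule bot)
    show "((F \<circ> real_of_ereal) \<longlongrightarrow> B) (at_left \<infinity>)"
      unfolding ereal_tendsto_simps1 by (rule top)
  qed (use cont in auto)
  then show ?thesis
    by (simp add: interval_lebesgue_integral_def set_lebesgue_integral_def)
qed

lemma ln_le_half_sub_inverse:
  fixes r :: real
  assumes "1 \<le> r"
  shows "2 * ln r \<le> r - 1 / r"
proof -
  have "(\<lambda>r. r - 1 / r - 2 * ln r) 1 \<le> (\<lambda>r. r - 1 / r - 2 * ln r) r"
  proof (rule DERIV_nonneg_imp_nondecreasing[OF assms])
    fix y :: real
    assume "1 \<le> y"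
    then have "((\<lambda>r. r - 1 / r - 2 * ln r) has_real_derivative (1 - 1 / y)\<^sup>2) (at y)"
      by (auto intro!: derivative_eq_intros simp: field_simps power2_eq_square)
    then show "\<exists>d. ((\<lambda>r. r - 1 / r - 2 * ln r) has_real_derivative d) (at y) \<and> 0 \<le> d"
      by auto
  qed
  then show ?thesis by simp
qed

lemma DERIV_fourth_deriv_times_cube_by_parts:
  fixes f f' f'' f''' f'''' :: "real \<Rightarrow> real"
  assumes "\<And>x. (f has_real_derivative f' x) (at x)" "\<And>x. (f' has_real_derivative f'' x) (at x)"
    "\<And>x. (f'' has_real_derivative f''' x) (at x)" "\<And>x. (f''' has_real_derivative f'''' x) (at x)"
  shows "((\<lambda>x. f''' x * f x ^ 3 - 3 * f'' x * f x ^ 2 * f' x + 2 * f x * f' x ^ 3)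
           has_real_derivative f'''' x * f x ^ 3 - 3 * f'' x ^ 2 * f x ^ 2 + 2 * f' x ^ 4) (at x)"
  by (auto intro!: derivative_eq_intros assms; algebra)

definition f1' :: "real \<Rightarrow> real" where
  "f1' x = 2 * x / (1 + x\<^sup>2)"

definition f1'' :: "real \<Rightarrow> real" where
  "f1'' x = 2 * (1 - x\<^sup>2) / (1 + x\<^sup>2) ^ 2"

definition f1''' :: "real \<Rightarrow> real" where
  "f1''' x = 4 * x * (x\<^sup>2 - 3) / (1 + x\<^sup>2) ^ 3"

definition f1'''' :: "real \<Rightarrow> real" where
  "f1'''' x = 12 * (6 * x\<^sup>2 - x ^ 4 - 1) / (1 + x\<^sup>2) ^ 4"

lemma has_real_derivative_f1: "(f1 has_real_derivative f1' x) (at x)"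
  unfolding f1_def [abs_def] f1'_def using one_plus_square_pos[of x]
  by (auto intro!: derivative_eq_intros simp: field_simps)

lemma has_real_derivative_f1': "(f1' has_real_derivative f1'' x) (at x)"
  unfolding f1'_def [abs_def] f1''_def using one_plus_square_pos[of x]
  by (auto intro!: derivative_eq_intros simp: field_simps power2_eq_square)

lemma has_real_derivative_f1'': "(f1'' has_real_derivative f1''' x) (at x)"
  unfolding f1''_def [abs_def] f1'''_def using one_plus_square_pos[of x]
  by (auto intro!: derivative_eq_intros simp: field_simps) algebra

lemma has_real_derivative_f1''': "(f1''' has_real_derivative f1'''' x) (at x)"
  unfolding f1'''_def [abs_def] f1''''_def using one_plus_square_pos[of x]
  by (auto intro!: derivative_eq_intros simp: field_simps) algebra

lemma deriv4_f1: "(deriv ^^ 4) f1 = f1''''"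
proof -
  have "deriv f1 = f1'" "deriv f1' = f1''" "deriv f1'' = f1'''" "deriv f1''' = f1''''"
    using has_real_derivative_f1 has_real_derivative_f1' has_real_derivative_f1''
      has_real_derivative_f1''' DERIV_imp_deriv by blast+
  then show ?thesis by (simp add: numeral_eq_Suc)
qed

lemma isCont_f1'''': "isCont f1'''' x"
  unfolding f1''''_def [abs_def] using one_plus_square_pos[of x]
  by (auto intro!: continuous_intros)

lemmas isCont_f1_derivs = isCont_f1''''
  DERIV_isCont[OF has_real_derivative_f1] DERIV_isCont[OF has_real_derivative_f1']
  DERIV_isCont[OF has_real_derivative_f1''] DERIV_isCont[OF has_real_derivative_f1''']

definition jb :: "real \<Rightarrow> real" where
  "jb x = sqrt (1 + x\<^sup>2)"

lemma jb_ge_1: "1 \<le> jb x"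
  by (simp add: jb_def)

lemma jb_pos: "0 < jb x"
  using jb_ge_1[of x] by linarith

lemma jb_squared: "jb x ^ 2 = 1 + x\<^sup>2"
  by (simp add: jb_def)

lemma has_real_derivative_jb: "(jb has_real_derivative x / jb x) (at x)"
  unfolding jb_def [abs_def] using one_plus_square_pos[of x]
  by (auto intro!: derivative_eq_intros simp: field_simps)

lemma has_real_derivative_x_div_jb_power:
  "((\<lambda>x. x / jb x ^ k) has_real_derivative real k / jb x ^ (k + 2) - (real k - 1) / jb x ^ k) (at x)"
proof (cases k)
  case 0
  then show ?thesis by simp
next
  case (Suc n)
  define J where "J = jb x"
  have J: "0 < J" "x\<^sup>2 = J\<^sup>2 - 1"
    using jb_pos[of x] jb_squared[of x] by (simp_all add: J_def)
  have "((\<lambda>x. x / jb x ^ k) has_real_derivative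
          (1 * J ^ k - x * (real k * (x / J * J ^ (k - Suc 0)))) / (J ^ k * J ^ k)) (at x)"
    unfolding J_def using jb_pos[of x]
    by (intro DERIV_divide DERIV_ident DERIV_power has_real_derivative_jb) simp
  also have "(1 * J ^ k - x * (real k * (x / J * J ^ (k - Suc 0)))) / (J ^ k * J ^ k)
      = (J\<^sup>2 - real k * x\<^sup>2) / J ^ (k + 2)"
    using J(1) by (simp add: Suc field_simps power2_eq_square)
  also have "\<dots> = real k / J ^ (k + 2) - (real k - 1) / J ^ k"
    unfolding J(2) using J(1) by (simp add: field_simps power_add power2_eq_square)
  finally show ?thesis
    unfolding J_def .
qed

lemma f1_squared_le: "f1 x ^ 2 \<le> 4 * (jb x - 2 + 1 / jb x)"
proof -
  define r where "r = sqrt (jb x)"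
  have r: "1 \<le> r" "r ^ 2 = jb x"
    using jb_ge_1[of x] by (simp_all add: r_def)
  have "r ^ 4 = (r ^ 2) ^ 2"
    by (simp add: power4_eq_xxxx power2_eq_square)
  also have "\<dots> = 1 + x\<^sup>2"
    by (simp add: r(2) jb_squared)
  finally have "f1 x = ln (r ^ 4)"
    by (simp add: f1_def)
  also have "\<dots> = 2 * (2 * ln r)"
    using r(1) by (simp add: ln_realpow)
  also have "\<dots> \<le> 2 * (r - 1 / r)"
    using ln_le_half_sub_inverse[OF r(1)] by simp
  finally have "f1 x \<le> 2 * (r - 1 / r)" .
  moreover have "0 \<le> f1 x"
    unfolding f1_def by (rule ln_ge_zero) simp
  ultimately have "f1 x ^ 2 \<le> (2 * (r - 1 / r)) ^ 2"
    by (rule power_mono)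
  also have "\<dots> = 4 * (r ^ 2 - 2 + 1 / r ^ 2)"
    using r(1) by (simp add: field_simps power2_eq_square)
  finally show ?thesis
    by (simp add: r(2))
qed

definition majorant :: "real \<Rightarrow> real" where
  "majorant x = 12 * (jb x - 2 + 1 / jb x) * f1'' x ^ 2 - 2 * f1' x ^ 4"

lemma by_parts_integrand_le_majorant: "3 * f1'' x ^ 2 * f1 x ^ 2 - 2 * f1' x ^ 4 \<le> majorant x"
  using mult_right_mono[OF f1_squared_le[of x], of "3 * f1'' x ^ 2"]
  by (simp add: majorant_def algebra_simps)

lemma majorant_eq:
  "majorant x = 48 / jb x ^ 3 - 128 / jb x ^ 4 - 144 / jb x ^ 5 + 448 / jb x ^ 6
                - 416 / jb x ^ 8 + 192 / jb x ^ 9"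
proof -
  define J where "J = jb x"
  have J: "0 < J" "1 + x\<^sup>2 = J\<^sup>2" "x ^ 4 = (J\<^sup>2 - 1)\<^sup>2" "1 - x\<^sup>2 = 2 - J\<^sup>2"
    using jb_pos[of x] jb_squared[of x] by (simp_all add: J_def power2_eq_square power4_eq_xxxx)
  show ?thesis
    unfolding majorant_def f1'_def f1''_def J_def[symmetric] power_mult_distrib power_divide J(2-4)
    using J(1) by (simp add: field_simps; algebra)
qed

(* Obtained from the reduction formula (x / <x>^k)' = k / <x>^(k+2) - (k - 1) / <x>^k
   of has_real_derivative_x_div_jb_power, together with arctan' = 1 / <x>^2. *)
definition majorant_primitive :: "real \<Rightarrow> real" where
  "majorant_primitive x =
     1392/35 * (x / jb x ^ 1) - 26 * (x / jb x ^ 2) - 144/35 * (x / jb x ^ 3)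
     + 76/3 * (x / jb x ^ 4) + 1152/35 * (x / jb x ^ 5) - 208/3 * (x / jb x ^ 6)
     + 192/7 * (x / jb x ^ 7) - 26 * arctan x"

lemma has_real_derivative_majorant_primitive:
  "(majorant_primitive has_real_derivative majorant x) (at x)"
proof -
  define d where "d k = real k / jb x ^ (k + 2) - (real k - 1) / jb x ^ k" for k
  define w where "w = inverse (jb x)"
  have pow: "c / jb x ^ k = c * w ^ k" "inverse (jb x ^ k) = w ^ k" for c :: real and k :: nat
    by (simp_all add: w_def divide_inverse power_inverse)
  have "(majorant_primitive has_real_derivative
          1392/35 * d 1 - 26 * d 2 - 144/35 * d 3 + 76/3 * d 4 + 1152/35 * d 5 - 208/3 * d 6
          + 192/7 * d 7 - 26 * inverse (1 + x\<^sup>2)) (at x)"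
    unfolding majorant_primitive_def [abs_def] d_def
    by (intro DERIV_add DERIV_diff DERIV_cmult has_real_derivative_x_div_jb_power DERIV_arctan)
  also have "1392/35 * d 1 - 26 * d 2 - 144/35 * d 3 + 76/3 * d 4 + 1152/35 * d 5 - 208/3 * d 6
          + 192/7 * d 7 - 26 * inverse (1 + x\<^sup>2) = majorant x"
    unfolding majorant_eq d_def jb_squared[symmetric] pow by simp algebra
  finally show ?thesis .
qed

lemma majorant_primitive_at_top: "(majorant_primitive \<longlongrightarrow> 1392/35 - 13 * pi) at_top"
  unfolding majorant_primitive_def [abs_def] jb_def by real_asymp

lemma majorant_primitive_at_bot: "(majorant_primitive \<longlongrightarrow> 13 * pi - 1392/35) at_bot"
  unfolding majorant_primitive_def [abs_def] jb_def by real_asymp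

lemma isCont_majorant: "isCont majorant x"
  using DERIV_isCont[OF has_real_derivative_jb] jb_pos[of x]
  unfolding majorant_def [abs_def] by (auto intro!: continuous_intros isCont_f1_derivs)

lemma integrable_majorant: "integrable lborel majorant"
proof (rule integrable_lborel_if_bigo_inverse_square)
  show "isCont majorant x" for x
    by (rule isCont_majorant)
qed (unfold majorant_def f1'_def f1''_def jb_def; real_asymp)+

lemma integral_majorant: "(\<integral>x. majorant x \<partial>lborel) = 2784/35 - 26 * pi"
  using integral_lborel_FTC[OF has_real_derivative_majorant_primitive isCont_majorant
      integrable_majorant majorant_primitive_at_bot majorant_primitive_at_top]
  by simp

lemma integrable_fourth_deriv_f1_times_cube: "integrable lborel (\<lambda>x. f1'''' x * f1 x ^ 3)"
proof (rule integrable_lborel_if_bigo_inverse_square)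
  show "isCont (\<lambda>x. f1'''' x * f1 x ^ 3) x" for x
    by (intro continuous_intros isCont_f1_derivs)
qed (unfold f1_def f1''''_def; real_asymp)+

lemma integral_fourth_deriv_f1_times_cube_le:
  "(\<integral>x. f1'''' x * f1 x ^ 3 \<partial>lborel) \<le> (\<integral>x. majorant x \<partial>lborel)"
proof -
  let ?g = "\<lambda>x. f1'''' x * f1 x ^ 3"
  let ?h = "\<lambda>x. 3 * f1'' x ^ 2 * f1 x ^ 2 - 2 * f1' x ^ 4"
  have integrable: "integrable lborel ?h"
  proof (rule integrable_lborel_if_bigo_inverse_square)
    show "isCont ?h x" for x
      by (intro continuous_intros isCont_f1_derivs)
  qed (unfold f1_def f1'_def f1''_def; real_asymp)+
  have "(\<integral>x. ?g x - ?h x \<partial>lborel) = 0 - 0"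
  proof (rule integral_lborel_FTC)
    show "((\<lambda>x. f1''' x * f1 x ^ 3 - 3 * f1'' x * f1 x ^ 2 * f1' x + 2 * f1 x * f1' x ^ 3)
            has_real_derivative ?g x - ?h x) (at x)" for x
      using DERIV_fourth_deriv_times_cube_by_parts[OF has_real_derivative_f1
          has_real_derivative_f1' has_real_derivative_f1'' has_real_derivative_f1''']
      by (simp add: algebra_simps)
    show "isCont (\<lambda>x. ?g x - ?h x) x" for x
      by (intro continuous_intros isCont_f1_derivs)
    show "integrable lborel (\<lambda>x. ?g x - ?h x)"
      using integrable_fourth_deriv_f1_times_cube integrable by (rule Bochner_Integration.integrable_diff)
  qed (unfold f1_def f1'_def f1''_def f1'''_def; real_asymp)+
  then have "(\<integral>x. ?g x \<partial>lborel) = (\<integral>x. ?h x \<partial>lborel)"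
    using integrable_fourth_deriv_f1_times_cube integrable by simp
  also have "\<dots> \<le> (\<integral>x. majorant x \<partial>lborel)"
    using integrable integrable_majorant by (rule integral_mono) (rule by_parts_integrand_le_majorant)
  finally show ?thesis .
qed

theorem lemma2p2:
  shows "integrable lborel (\<lambda>x. (deriv ^^ 4) f1 x * (f1 x) ^ 3) \<and>
         (\<integral>x. (deriv ^^ 4) f1 x * (f1 x) ^ 3 \<partial>lborel) < 0"
proof -
  have "(\<integral>x. f1'''' x * f1 x ^ 3 \<partial>lborel) \<le> 2784/35 - 26 * pi"
    using integral_fourth_deriv_f1_times_cube_le by (simp add: integral_majorant)
  also have "\<dots> < 0"
    using pi_approx by simp
  finally show ?thesis
    using integrable_fourth_deriv_f1_times_cube by (simp add: deriv4_f1)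
qed

end
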